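(* Consider the asynchronous $(n,k)$ game on the complete graph with agent set $[n]$ ($n\ge2$) consisting of $n_r$ rejectors and $n-n_r$ random followers, and let $Z_t=\sum_{i\in[n]}x_i(t)$. Then $$\mathbb{E}[Z_{t+1}-Z_t]=-\frac{n_r\,\mathbb{E}[Z_t]}{n(n-1)},$$ and $(Z_t)_{t\ge0}$ is a supermartingale.
   Context: Each agent $i\in[n]$ holds an opinion $x_i(t)\in\{0,1\}$ at time $t=0,1,2,\dots$. The social graph is complete: every agent's social neighbors are all the other $n-1$ agents. The game is asynchronous: at each time step a single agent, chosen uniformly at random from $[n]$ (independently of the past), updates its opinion, and all other opinions stay the same. A rejector holds opinion $0$ at all times. A random follower has initial opinion distributed as Bernoulli$(1/2)$ (independently across agents), and when it updates it adopts the current opinion of one of its social neighbors chosen uniformly at random. *)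

theory Defs
  imports "HOL-Probability.Probability"
begin

text \<open>Agents are 0,...,n-1. A state is an opinion profile x :: nat => bool
  (True = opinion 1); only the values at agents below n matter.
  R is the set of rejectors; all other agents are random followers.\<close>

type_synonym state = "nat \<Rightarrow> bool"

definition Zsum :: "nat \<Rightarrow> state \<Rightarrow> real" where
  "Zsum n x = (\<Sum>i<n. of_bool (x i))"

definition init_dist :: "nat \<Rightarrow> nat set \<Rightarrow> state pmf" where
  "init_dist n R = Pi_pmf {..<n} False
     (\<lambda>i. if i \<in> R then return_pmf False else bernoulli_pmf (1/2))"

definition step :: "nat \<Rightarrow> nat set \<Rightarrow> state \<Rightarrow> state pmf" where
  "step n R x = pmf_of_set {..<n} \<bind> (\<lambda>i.
     if i \<in> R then return_pmf (x(i := False))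
     else map_pmf (\<lambda>j. x(i := x j)) (pmf_of_set ({..<n} - {i})))"

text \<open>Distribution of the trajectory [x(0), ..., x(t)] (a list of length t+1).\<close>
primrec paths :: "nat \<Rightarrow> nat set \<Rightarrow> nat \<Rightarrow> state list pmf" where
  "paths n R 0 = map_pmf (\<lambda>x. [x]) (init_dist n R)"
| "paths n R (Suc t) = paths n R t \<bind> (\<lambda>p. map_pmf (\<lambda>y. p @ [y]) (step n R (last p)))"

text \<open>Supermartingale property of Y(x(t)) with respect to the natural filtration
  F_t = sigma(x(0),...,x(t)): integrability and, for every F_t-event
  (i.e. every set A of trajectory prefixes of length t+1),
  E[(Y_(t+1) - Y_t) 1_A] \<le> 0, i.e. E[Y_(t+1) | F_t] \<le> Y_t a.s.\<close>
definition supermartingale_along :: "(nat \<Rightarrow> state list pmf) \<Rightarrow> (state \<Rightarrow> real) \<Rightarrow> bool" where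
  "supermartingale_along P Y \<longleftrightarrow>
     (\<forall>t. integrable (measure_pmf (P t)) (\<lambda>p. Y (p ! t))) \<and>
     (\<forall>t A. measure_pmf.expectation (P (Suc t))
              (\<lambda>p. indicator A (take (Suc t) p) * (Y (p ! Suc t) - Y (p ! t))) \<le> 0)"

end

theory Submission
  imports Defs
begin

text \<open>When agent \<open>a\<close> updates as a follower, \<open>Z\<close> changes in expectation by
  \<open>(Z - x\<^sub>a)/(n - 1) - x\<^sub>a\<close>. Summed over all agents these drifts cancel (the voter
  model conserves the expected number of ones), so the drift of a uniformly chosen update is
  minus the average of the rejectors' follower drifts, each of which is \<open>Z/(n - 1)\<close> because
  rejectors hold 0. The resulting drift \<open>-n\<^sub>r Z/(n(n - 1)) \<le> 0\<close> holds conditionally on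
  every trajectory prefix, which gives the identity as well as the supermartingale property.\<close>

lemma integral_bind_pmf_bounded:
  fixes f :: "'b \<Rightarrow> real"
  assumes "\<And>y. \<bar>f y\<bar> \<le> B"
  shows "measure_pmf.expectation (M \<bind> N) f
       = measure_pmf.expectation M (\<lambda>x. measure_pmf.expectation (N x) f)"
  unfolding measure_pmf_bind
  by (rule integral_bind[where K = "count_space UNIV" and B = B and B' = 1])
     (use assms in \<open>auto simp: measure_pmf.emeasure_space_1 space_subprob_algebra
        measure_pmf.subprob_space_axioms\<close>)

lemma Zsum_remove:
  assumes "a < n"
  shows "Zsum n x = of_bool (x a) + (\<Sum>j\<in>{..<n} - {a}. of_bool (x j))"
  unfolding Zsum_def using assms by (subst sum.remove[of _ a]) auto

lemma Zsum_fun_upd: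
  assumes "a < n"
  shows "Zsum n (x(a := b)) = Zsum n x - of_bool (x a) + of_bool b"
  using Zsum_remove[OF assms, of "x(a := b)"] Zsum_remove[OF assms, of x] by simp

lemma Zsum_nonneg: "0 \<le> Zsum n x"
  unfolding Zsum_def by (simp add: sum_nonneg)

lemma Zsum_le: "Zsum n x \<le> real n"
  unfolding Zsum_def using sum_mono[of "{..<n}" "\<lambda>i. of_bool (x i)" "\<lambda>_. 1 :: real"] by simp

lemma lessThan_minus_singleton_nonempty:
  fixes n a :: nat
  assumes "2 \<le> n"
  shows "{..<n} - {a} \<noteq> {}"
proof -
  have "0 \<in> {..<n}" "1 \<in> {..<n}"
    using assms by auto
  then show ?thesis
    by (metis Diff_iff empty_iff singletonD zero_neq_one)
qed

lemma abs_Zsum_diff_le: "\<bar>Zsum n x - Zsum n y\<bar> \<le> real n"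
  using Zsum_nonneg[of n x] Zsum_nonneg[of n y] Zsum_le[of n x] Zsum_le[of n y] by linarith

definition follower_drift :: "nat \<Rightarrow> state \<Rightarrow> nat \<Rightarrow> real" where
  "follower_drift n x a = (Zsum n x - of_bool (x a)) / (real n - 1) - of_bool (x a)"

lemma expectation_Zsum_copy_other:
  assumes "2 \<le> n" "a < n"
  shows "measure_pmf.expectation (map_pmf (\<lambda>j. x(a := x j)) (pmf_of_set ({..<n} - {a})))
           (\<lambda>y. Zsum n y - Zsum n x) = follower_drift n x a"
proof -
  have card: "card ({..<n} - {a}) = n - 1"
    using assms by simp
  have "measure_pmf.expectation (map_pmf (\<lambda>j. x(a := x j)) (pmf_of_set ({..<n} - {a})))
          (\<lambda>y. Zsum n y - Zsum n x)
      = (\<Sum>j\<in>{..<n} - {a}. of_bool (x j) - of_bool (x a)) / real (n - 1)"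
    using lessThan_minus_singleton_nonempty[OF assms(1)] card assms
    by (simp add: integral_pmf_of_set Zsum_fun_upd)
  also have "\<dots> = (Zsum n x - of_bool (x a) - real (n - 1) * of_bool (x a)) / real (n - 1)"
    using Zsum_remove[OF assms(2), of x] card by (simp add: sum_subtractf)
  also have "\<dots> = follower_drift n x a"
    using assms unfolding follower_drift_def by (simp add: field_simps of_nat_diff)
  finally show ?thesis .
qed

lemma sum_follower_drift:
  assumes "2 \<le> n"
  shows "(\<Sum>a<n. follower_drift n x a) = 0"
proof -
  have "(\<Sum>a<n. follower_drift n x a) = (real n * Zsum n x - Zsum n x) / (real n - 1) - Zsum n x"
    unfolding follower_drift_def Zsum_def by (simp add: sum_subtractf sum_divide_distrib[symmetric])
  also have "\<dots> = 0"
    using assms by (simp add: field_simps)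
  finally show ?thesis .
qed

lemma expectation_step_Zsum:
  assumes n: "2 \<le> n" and R: "R \<subseteq> {..<n}" and rejectors: "\<forall>i\<in>R. \<not> x i"
  shows "measure_pmf.expectation (step n R x) (\<lambda>y. Zsum n y - Zsum n x)
       = - (real (card R) * Zsum n x) / (real n * (real n - 1))"
proof -
  let ?d = "follower_drift n x"
  have update: "measure_pmf.expectation (if a \<in> R then return_pmf (x(a := False))
       else map_pmf (\<lambda>j. x(a := x j)) (pmf_of_set ({..<n} - {a}))) (\<lambda>y. Zsum n y - Zsum n x)
     = (if a \<in> R then 0 else ?d a)" if "a < n" for a
    using that rejectors expectation_Zsum_copy_other[OF n that] by (simp add: Zsum_fun_upd)
  have "measure_pmf.expectation (step n R x) (\<lambda>y. Zsum n y - Zsum n x)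
      = (\<Sum>a<n. (if a \<in> R then 0 else ?d a) / real n)"
    unfolding step_def using n lessThan_minus_singleton_nonempty[OF n]
    by (subst pmf_expectation_bind_pmf_of_set) (auto simp: update divide_inverse_commute)
  also have "\<dots> = ((\<Sum>a<n. ?d a) - (\<Sum>a\<in>R. ?d a)) / real n"
    using R by (simp add: sum_divide_distrib[symmetric] sum.If_cases Diff_eq[symmetric]
        sum_diff inf.absorb2)
  also have "(\<Sum>a\<in>R. ?d a) = real (card R) * Zsum n x / (real n - 1)"
    using rejectors unfolding follower_drift_def by simp
  finally show ?thesis
    using sum_follower_drift[OF n] by simp
qed

lemma set_pmf_init_dist_rejectors:
  assumes "x \<in> set_pmf (init_dist n R)" "i \<in> R"
  shows "\<not> x i"
  using assms unfolding init_dist_def by (cases "i < n") (auto simp: set_Pi_pmf PiE_dflt_def)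

lemma set_pmf_step_rejectors:
  assumes "y \<in> set_pmf (step n R x)" "\<forall>i\<in>R. \<not> x i" "i \<in> R"
  shows "\<not> y i"
  using assms unfolding step_def by (auto split: if_splits)

lemma set_pmf_paths:
  assumes "p \<in> set_pmf (paths n R t)"
  shows "length p = Suc t \<and> (\<forall>i\<in>R. \<not> last p i)"
  using assms
proof (induction t arbitrary: p)
  case 0
  then show ?case
    by (auto dest: set_pmf_init_dist_rejectors)
next
  case (Suc t)
  then obtain q y where "q \<in> set_pmf (paths n R t)" "y \<in> set_pmf (step n R (last q))"
    and "p = q @ [y]"
    by auto
  with Suc.IH show ?case
    by (auto dest: set_pmf_step_rejectors)
qed

lemma expectation_paths_weighted_increment:
  assumes n: "2 \<le> n" and R: "R \<subseteq> {..<n}" and G: "\<And>q. \<bar>G q\<bar> \<le> B"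
  shows "measure_pmf.expectation (paths n R (Suc t))
           (\<lambda>p. G (take (Suc t) p) * (Zsum n (p ! Suc t) - Zsum n (p ! t)))
       = - real (card R) / (real n * (real n - 1))
           * measure_pmf.expectation (paths n R t) (\<lambda>p. G p * Zsum n (p ! t))"
    (is "?lhs = ?c * _")
proof -
  have bounded: "\<bar>G (take (Suc t) p) * (Zsum n (p ! Suc t) - Zsum n (p ! t))\<bar> \<le> B * real n" for p
    unfolding abs_mult using G abs_Zsum_diff_le
    by (intro mult_mono) (auto intro: order_trans[OF abs_ge_zero])
  have conditional: "measure_pmf.expectation (step n R (last q))
      (\<lambda>y. G (take (Suc t) (q @ [y])) * (Zsum n ((q @ [y]) ! Suc t) - Zsum n ((q @ [y]) ! t)))
    = ?c * (G q * Zsum n (q ! t))" if "q \<in> set_pmf (paths n R t)" for q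
  proof -
    from set_pmf_paths[OF that] have length: "length q = Suc t"
      and rejectors: "\<forall>i\<in>R. \<not> last q i" by auto
    then have "q ! t = last q"
      by (cases q rule: rev_cases) (auto simp: nth_append)
    then show ?thesis
      using length expectation_step_Zsum[OF n R rejectors] by (simp add: nth_append)
  qed
  have "?lhs = measure_pmf.expectation (paths n R t) (\<lambda>q. measure_pmf.expectation (step n R (last q))
      (\<lambda>y. G (take (Suc t) (q @ [y])) * (Zsum n ((q @ [y]) ! Suc t) - Zsum n ((q @ [y]) ! t))))"
    by (simp only: paths.simps integral_bind_pmf_bounded[OF bounded] integral_map_pmf)
  also have "\<dots> = measure_pmf.expectation (paths n R t) (\<lambda>q. ?c * (G q * Zsum n (q ! t)))"
    using conditional by (intro integral_cong_AE) (auto intro: AE_pmfI)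
  finally show ?thesis
    by simp
qed

theorem lemma4:
  fixes n n_r :: nat and R :: "nat set"
  assumes "n \<ge> 2" and "R \<subseteq> {..<n}" and "card R = n_r"
  shows "\<forall>t. measure_pmf.expectation (paths n R (Suc t))
               (\<lambda>p. Zsum n (p ! Suc t) - Zsum n (p ! t))
             = - (real n_r * measure_pmf.expectation (paths n R t) (\<lambda>p. Zsum n (p ! t)))
                 / (real n * (real n - 1))
         \<and> supermartingale_along (paths n R) (Zsum n)"
proof -
  have drift: "measure_pmf.expectation (paths n R (Suc t)) (\<lambda>p. Zsum n (p ! Suc t) - Zsum n (p ! t))
      = - (real n_r * measure_pmf.expectation (paths n R t) (\<lambda>p. Zsum n (p ! t)))
          / (real n * (real n - 1))" for t
    using expectation_paths_weighted_increment[OF assms(1,2), of "\<lambda>_. 1" 1] assms(3) by simp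
  have integrable: "integrable (measure_pmf (paths n R t)) (\<lambda>p. Zsum n (p ! t))" for t
    by (rule measure_pmf.integrable_const_bound[where B = "real n"]) (auto simp: Zsum_nonneg Zsum_le)
  have nonincreasing: "measure_pmf.expectation (paths n R (Suc t))
      (\<lambda>p. indicator A (take (Suc t) p) * (Zsum n (p ! Suc t) - Zsum n (p ! t))) \<le> 0" for t A
  proof -
    have "measure_pmf.expectation (paths n R (Suc t))
        (\<lambda>p. indicator A (take (Suc t) p) * (Zsum n (p ! Suc t) - Zsum n (p ! t)))
      = - real (card R) / (real n * (real n - 1))
          * measure_pmf.expectation (paths n R t) (\<lambda>p. indicator A p * Zsum n (p ! t))"
      by (rule expectation_paths_weighted_increment[OF assms(1,2), where B = 1]) simp
    also have "\<dots> \<le> 0"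
      using assms(1) by (intro mult_nonpos_nonneg integral_nonneg_AE) (auto simp: Zsum_nonneg)
    finally show ?thesis .
  qed
  show ?thesis
    unfolding supermartingale_along_def using drift integrable nonincreasing by blast
qed

end
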